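(* Let $s\ge 2$ and $n\ge 2$ be integers, and let \[f(x)=(x^{s}-1)^{n}-x^{n-1}(x^{s-1}-1)^{n},\qquad g(x)=x^{ns}-x^{ns-1}+x^{n-1}-1.\] If $\alpha\in\mathbb{C}$ is a root of $g(x)$, then $\alpha^{n}$ is a root of $f(x)$.
   Context: Here (after the substitution $x=1-q$) $f$ is, up to the factor $(x-1)^n$, the interesting factor of the chromatic polynomial of the theta-graph with $n$ paths of length $s$, and $g$ is the interesting factor of the chromatic polynomial of the generalised theta graph with paths of lengths $ns-n+1,\ldots,ns$. *)

theory Defs
  imports Complex_Main
begin

definition f_poly :: "nat \<Rightarrow> nat \<Rightarrow> complex \<Rightarrow> complex" where
  "f_poly s n x = (x ^ s - 1) ^ n - x ^ (n - 1) * (x ^ (s - 1) - 1) ^ n"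

definition g_poly :: "nat \<Rightarrow> nat \<Rightarrow> complex \<Rightarrow> complex" where
  "g_poly s n x = x ^ (n * s) - x ^ (n * s - 1) + x ^ (n - 1) - 1"

end

theory Submission
  imports Defs
begin

text \<open>A root \<alpha> of g satisfies \<alpha>^(ns) - 1 = \<alpha>^(n-1) (\<alpha>^(n(s-1)) - 1); raising this
  to the n-th power and writing x = \<alpha>^n gives (x^s - 1)^n = x^(n-1) (x^(s-1) - 1)^n.\<close>

lemma g_poly_root_factor:
  fixes \<alpha> :: complex
  assumes "s \<ge> 1" and "n \<ge> 1" and "g_poly s n \<alpha> = 0"
  shows "\<alpha> ^ (n * s) - 1 = \<alpha> ^ (n - 1) * (\<alpha> ^ (n * (s - 1)) - 1)"
proof -
  have exponent: "n * s - 1 = (n - 1) + n * (s - 1)"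
    using assms(1,2) by (simp add: algebra_simps diff_mult_distrib2)
  have "\<alpha> ^ (n * s) - 1 = \<alpha> ^ (n * s - 1) - \<alpha> ^ (n - 1)"
    using assms(3) unfolding g_poly_def by (simp add: algebra_simps)
  also have "\<alpha> ^ (n * s - 1) = \<alpha> ^ (n - 1) * \<alpha> ^ (n * (s - 1))"
    unfolding exponent by (simp only: power_add)
  finally show ?thesis by (simp add: algebra_simps)
qed

lemma f_poly_power_eq:
  "f_poly s n (\<alpha> ^ n) =
     (\<alpha> ^ (n * s) - 1) ^ n - (\<alpha> ^ (n - 1) * (\<alpha> ^ (n * (s - 1)) - 1)) ^ n"
  unfolding f_poly_def power_mult[symmetric] power_mult_distrib
  by (simp add: mult.commute)

theorem theorem6:
  fixes s n :: nat and \<alpha> :: complex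
  assumes "s \<ge> 2" and "n \<ge> 2"
    and "g_poly s n \<alpha> = 0"
  shows "f_poly s n (\<alpha> ^ n) = 0"
  using g_poly_root_factor[of s n \<alpha>] assms by (simp add: f_poly_power_eq)

end
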